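(* Let $\kappa$ be a regular uncountable cardinal. If $\kappa$ carries a uniform normal 2-precipitous ideal, then $\kappa\to_{hc}[\kappa]^2_{\omega,2}$.
   Context: An ideal $I$ on $\kappa$ is uniform if it contains every subset of $\kappa$ of size $<\kappa$; it is normal if for every sequence $\langle X_\alpha:\alpha<\kappa\rangle$ of members of $I$, the diagonal union $\{\beta<\kappa:\exists\alpha<\beta\ (\beta\in X_\alpha)\}$ is in $I$. The game $G_I$: Players Empty and Nonempty alternate, Empty moving first, producing a coordinatewise $\subseteq$-decreasing sequence $\langle (A_n,B_n):n\in\omega\rangle$ of pairs of $I$-positive sets; Nonempty wins iff there exist $\alpha<\beta$ with $\alpha\in\bigcap_n A_n$, $\beta\in\bigcap_n B_n$. $I$ is 2-precipitous if Empty has no winning strategy in $G_I$. A graph $(X,E)$ is highly connected if for every $Y\subseteq X$ with $|Y|<|X|$ the induced subgraph on $X\setminus Y$ is connected. For $k\in\omega$, $\kappa\to_{hc}[\kappa]^2_{\omega,k}$ means: for every $c:[\kappa]^2\to\omega$ there exist $H\in[\kappa]^\kappa$ and $K\in[\omega]^k$ such that $(H,c^{-1}(K)\cap[H]^2)$ is highly connected. *)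

theory Defs
  imports Main "HOL-Library.Countable_Set"
begin

unbundle cardinal_syntax

text \<open>The cardinal kappa is represented by a type 'k with a well-order; the elements
  of kappa are the elements of 'k, and the ordinal order is the type's order.\<close>

definition wo_rel_of :: "('k::wellorder) rel" where
  "wo_rel_of = {(x, y). x \<le> y}"

definition ideal_on :: "('k set) set \<Rightarrow> bool" where
  "ideal_on I \<longleftrightarrow> {} \<in> I \<and> UNIV \<notin> I
     \<and> (\<forall>A B. A \<in> I \<and> B \<subseteq> A \<longrightarrow> B \<in> I)
     \<and> (\<forall>A B. A \<in> I \<and> B \<in> I \<longrightarrow> A \<union> B \<in> I)"

definition uniform_ideal :: "('k set) set \<Rightarrow> bool" where
  "uniform_ideal I \<longleftrightarrow> (\<forall>X :: 'k set. |X| <o |UNIV :: 'k set| \<longrightarrow> X \<in> I)"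

definition normal_ideal :: "(('k::wellorder) set) set \<Rightarrow> bool" where
  "normal_ideal I \<longleftrightarrow> (\<forall>X :: 'k \<Rightarrow> 'k set. (\<forall>\<alpha>. X \<alpha> \<in> I)
      \<longrightarrow> {\<beta>. \<exists>\<alpha><\<beta>. \<beta> \<in> X \<alpha>} \<in> I)"

text \<open>The game G_I. A move is a pair (A_n, B_n) of I-positive sets; the moves are
  coordinatewise decreasing. Empty makes the moves with even index.\<close>

definition legal_move :: "('k set) set \<Rightarrow> 'k set \<times> 'k set \<Rightarrow> bool" where
  "legal_move I m \<longleftrightarrow> fst m \<notin> I \<and> snd m \<notin> I"

definition legal_hist :: "('k set) set \<Rightarrow> ('k set \<times> 'k set) list \<Rightarrow> bool" where
  "legal_hist I h \<longleftrightarrow> (\<forall>i < length h. legal_move I (h ! i))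
     \<and> (\<forall>i. Suc i < length h \<longrightarrow> fst (h ! Suc i) \<subseteq> fst (h ! i) \<and> snd (h ! Suc i) \<subseteq> snd (h ! i))"

definition legal_play :: "('k set) set \<Rightarrow> (nat \<Rightarrow> 'k set \<times> 'k set) \<Rightarrow> bool" where
  "legal_play I p \<longleftrightarrow> (\<forall>n. legal_move I (p n))
     \<and> (\<forall>n. fst (p (Suc n)) \<subseteq> fst (p n) \<and> snd (p (Suc n)) \<subseteq> snd (p n))"

definition empty_strategy :: "('k set) set \<Rightarrow> (('k set \<times> 'k set) list \<Rightarrow> 'k set \<times> 'k set) \<Rightarrow> bool" where
  "empty_strategy I \<sigma> \<longleftrightarrow> (\<forall>h. even (length h) \<and> legal_hist I h \<longrightarrow> legal_hist I (h @ [\<sigma> h]))"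

definition consistent_with :: "(('k set \<times> 'k set) list \<Rightarrow> 'k set \<times> 'k set) \<Rightarrow> (nat \<Rightarrow> 'k set \<times> 'k set) \<Rightarrow> bool" where
  "consistent_with \<sigma> p \<longleftrightarrow> (\<forall>n. p (2 * n) = \<sigma> (map p [0..<2 * n]))"

definition nonempty_wins :: "(nat \<Rightarrow> ('k::wellorder) set \<times> 'k set) \<Rightarrow> bool" where
  "nonempty_wins p \<longleftrightarrow> (\<exists>\<alpha> \<beta>. \<alpha> < \<beta> \<and> (\<forall>n. \<alpha> \<in> fst (p n)) \<and> (\<forall>n. \<beta> \<in> snd (p n)))"

definition empty_winning_strategy :: "(('k::wellorder) set) set \<Rightarrow> (('k set \<times> 'k set) list \<Rightarrow> 'k set \<times> 'k set) \<Rightarrow> bool" where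
  "empty_winning_strategy I \<sigma> \<longleftrightarrow> empty_strategy I \<sigma>
     \<and> (\<forall>p. legal_play I p \<and> consistent_with \<sigma> p \<longrightarrow> \<not> nonempty_wins p)"

definition two_precipitous :: "(('k::wellorder) set) set \<Rightarrow> bool" where
  "two_precipitous I \<longleftrightarrow> \<not> (\<exists>\<sigma>. empty_winning_strategy I \<sigma>)"

definition graph_connected :: "'a set \<Rightarrow> 'a set set \<Rightarrow> bool" where
  "graph_connected V E \<longleftrightarrow>
     (\<forall>u\<in>V. \<forall>v\<in>V. (u, v) \<in> {(x, y). x \<in> V \<and> y \<in> V \<and> {x, y} \<in> E}\<^sup>*)"

definition highly_connected :: "'a set \<Rightarrow> 'a set set \<Rightarrow> bool" where
  "highly_connected X E \<longleftrightarrow> (\<forall>Y \<subseteq> X. |Y| <o |X| \<longrightarrow> graph_connected (X - Y) E)"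

text \<open>kappa \<rightarrow>_hc [kappa]^2_{omega,k}; colourings are functions on 2-element sets
  (values on other sets are irrelevant).\<close>

definition hc_partition :: "nat \<Rightarrow> ('k set \<Rightarrow> nat) \<Rightarrow> bool" where
  "hc_partition k c \<longleftrightarrow> (\<exists>H :: 'k set. \<exists>K :: nat set.
      |H| =o |UNIV :: 'k set| \<and> finite K \<and> card K = k
      \<and> highly_connected H {e. e \<subseteq> H \<and> card e = 2 \<and> c e \<in> K})"

definition hc_arrow :: "'k itself \<Rightarrow> nat \<Rightarrow> bool" where
  "hc_arrow _ k \<longleftrightarrow> (\<forall>c :: 'k set \<Rightarrow> nat. hc_partition k c)"

end

theory Submission
  imports Defs
begin

text \<open>Call a colour \<open>m\<close> dense from \<open>A\<close> to \<open>B\<close> if, for all positive \<open>X \<subseteq> A\<close> and \<open>Z \<subseteq> B\<close>,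
  almost every point of \<open>X\<close> has positively many \<open>m\<close>-coloured upper neighbours in \<open>Z\<close>.
  If some colour is dense between positive sets, countable completeness of the ideal (a
  consequence of normality) shrinks them so that the points of \<open>B\<close> also share a second colour
  \<open>n\<close> towards \<open>A\<close>; the union is then highly connected in the colours \<open>{m, n}\<close>, because a set of
  size \<open>< \<kappa>\<close> lies in the ideal and its removal leaves short paths between all points.
  Otherwise, by normality, every positive pair can be shrunk so as to omit any prescribed colour
  \<open>k\<close> from its first to its second set. Empty omits colour \<open>k\<close> in her \<open>k\<close>-th move, so no
  \<open>\<alpha> < \<beta>\<close> survives in both intersections, contradicting 2-precipitousness.\<close>

section \<open>Small sets and ideals\<close>

lemma Field_wo_rel_of [simp]: "Field (wo_rel_of :: 'k::wellorder rel) = UNIV"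
  by (auto simp: Field_def wo_rel_of_def)

lemma underS_wo_rel_of [simp]: "underS (wo_rel_of :: 'k::wellorder rel) a = {..<a}"
  by (auto simp: underS_def wo_rel_of_def)

lemma wo_rel_of_ordIso_card_of_UNIV:
  assumes "card_order (wo_rel_of :: 'k::wellorder rel)"
  shows "(wo_rel_of :: 'k rel) =o |UNIV :: 'k set|"
  using card_of_Field_ordIso[of "wo_rel_of :: 'k rel"] assms ordIso_symmetric by force

lemma regularCard_card_of_UNIV:
  assumes "card_order (wo_rel_of :: 'k::wellorder rel)" and "regularCard (wo_rel_of :: 'k rel)"
    and "infinite (UNIV :: 'k set)"
  shows "regularCard |UNIV :: 'k set|"
proof -
  have "Cinfinite (wo_rel_of :: 'k rel)" using assms by (simp add: cinfinite_def)
  then show ?thesis using regularCard_ordIso[OF wo_rel_of_ordIso_card_of_UNIV] assms by blast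
qed

lemma card_of_lessThan_ordLess:
  assumes "card_order (wo_rel_of :: 'k::wellorder rel)"
  shows "|{..<a :: 'k}| <o |UNIV :: 'k set|"
  using card_of_underS[of "wo_rel_of :: 'k rel" a] assms
    ordLess_ordIso_trans[OF _ wo_rel_of_ordIso_card_of_UNIV] by simp

lemma card_of_atMost_ordLess:
  assumes "card_order (wo_rel_of :: 'k::wellorder rel)" and "infinite (UNIV :: 'k set)"
  shows "|{..a :: 'k}| <o |UNIV :: 'k set|"
proof -
  have "|{a}| <o |UNIV :: 'k set|"
    by (rule finite_ordLess_infinite[OF card_of_Well_order card_of_Well_order])
      (simp_all add: Field_card_of assms(2))
  then have "|{..<a} \<union> {a}| <o |UNIV :: 'k set|"
    using card_of_Un_ordLess_infinite[OF assms(2) card_of_lessThan_ordLess[OF assms(1)]] by blast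
  moreover have "{..<a} \<union> {a} = {..a}" by auto
  ultimately show ?thesis by simp
qed

lemma card_of_nat_ordLess_uncountable:
  assumes "uncountable A"
  shows "|UNIV :: nat set| <o |A|"
proof -
  have "\<not> |A| \<le>o |UNIV :: nat set|"
  proof
    assume "|A| \<le>o |UNIV :: nat set|"
    then obtain f :: "_ \<Rightarrow> nat" where "inj_on f A"
      unfolding card_of_ordLeq[symmetric] by blast
    then show False using assms unfolding countable_def by blast
  qed
  then show ?thesis
    using not_ordLeq_iff_ordLess[OF card_of_Well_order card_of_Well_order] by blast
qed

lemma card_of_UN_nat_ordLess:
  assumes "regularCard |UNIV :: 'a set|" and "uncountable (UNIV :: 'a set)"
    and "\<And>i :: nat. |S i| <o |UNIV :: 'a set|"
  shows "|\<Union>i. S i| <o |UNIV :: 'a set|"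
proof -
  have "Cinfinite |UNIV :: 'a set|"
    using assms(2) uncountable_infinite card_of_Card_order[of "UNIV :: 'a set"]
    by (simp add: cinfinite_def Field_card_of)
  then show ?thesis
    using card_of_UNION_ordLess_infinite_Field_regularCard[OF assms(1)]
      card_of_nat_ordLess_uncountable[OF assms(2)] assms(3) by blast
qed

lemma ideal_on_subset: "ideal_on I \<Longrightarrow> B \<in> I \<Longrightarrow> A \<subseteq> B \<Longrightarrow> A \<in> I"
  unfolding ideal_on_def by blast

lemma ideal_on_Un: "ideal_on I \<Longrightarrow> A \<in> I \<Longrightarrow> B \<in> I \<Longrightarrow> A \<union> B \<in> I"
  unfolding ideal_on_def by blast

lemma ideal_on_Diff_positive:
  assumes "ideal_on I" and "A \<notin> I" and "Y \<in> I"
  shows "A - Y \<notin> I"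
proof
  assume "A - Y \<in> I"
  then have "(A - Y) \<union> Y \<in> I" using ideal_on_Un assms by blast
  then show False using ideal_on_subset[OF assms(1)] assms(2) by blast
qed

lemma ideal_on_positive_ex: "ideal_on I \<Longrightarrow> A \<notin> I \<Longrightarrow> \<exists>x. x \<in> A"
  unfolding ideal_on_def by blast

lemma uniform_ideal_positive_card:
  fixes X :: "'k set"
  assumes "uniform_ideal I" and "X \<notin> I"
  shows "|X| =o |UNIV :: 'k set|"
proof -
  have "\<not> |X| <o |UNIV :: 'k set|"
    using assms unfolding uniform_ideal_def by blast
  then have "|UNIV :: 'k set| \<le>o |X|"
    using not_ordLess_iff_ordLeq[OF card_of_Well_order card_of_Well_order] by blast
  moreover have "|X| \<le>o |UNIV :: 'k set|" by (rule card_of_mono1) simp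
  ultimately show ?thesis using ordIso_iff_ordLeq by blast
qed

section \<open>Colourings and highly connected sets\<close>

definition adjacency :: "'a set \<Rightarrow> 'a set set \<Rightarrow> 'a rel" where
  "adjacency V E = {(x, y). x \<in> V \<and> y \<in> V \<and> {x, y} \<in> E}"

lemma graph_connected_iff_adjacency:
  "graph_connected V E \<longleftrightarrow> (\<forall>u\<in>V. \<forall>v\<in>V. (u, v) \<in> (adjacency V E)\<^sup>*)"
  by (simp add: graph_connected_def adjacency_def)

lemma sym_adjacency: "sym (adjacency V E)"
  by (auto simp: adjacency_def sym_def insert_commute)

lemma graph_connected_if_hub:
  assumes "\<forall>u\<in>V. \<exists>s\<in>S. (u, s) \<in> (adjacency V E)\<^sup>*"
    and "\<forall>s\<in>S. \<forall>t\<in>S. (s, t) \<in> (adjacency V E)\<^sup>*"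
  shows "graph_connected V E"
  unfolding graph_connected_iff_adjacency
proof (intro ballI)
  fix u v assume "u \<in> V" "v \<in> V"
  then obtain s t where "s \<in> S" "(u, s) \<in> (adjacency V E)\<^sup>*"
    and "t \<in> S" "(v, t) \<in> (adjacency V E)\<^sup>*"
    using assms(1) by meson
  moreover have "(t, v) \<in> (adjacency V E)\<^sup>*"
    using \<open>(v, t) \<in> _\<close> sym_rtrancl[OF sym_adjacency] by (rule symD[rotated])
  ultimately show "(u, v) \<in> (adjacency V E)\<^sup>*"
    using assms(2) by (meson rtrancl_trans)
qed

definition up_nbhd :: "('k::ord set \<Rightarrow> nat) \<Rightarrow> nat \<Rightarrow> 'k \<Rightarrow> 'k set \<Rightarrow> 'k set" where
  "up_nbhd c m x Z = {z\<in>Z. x < z \<and> c {x, z} = m}"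

definition dense_colour :: "'k set set \<Rightarrow> ('k::ord set \<Rightarrow> nat) \<Rightarrow> 'k set \<Rightarrow> 'k set \<Rightarrow> nat \<Rightarrow> bool" where
  "dense_colour I c A B m \<longleftrightarrow>
     (\<forall>X\<subseteq>A. \<forall>Z\<subseteq>B. X \<notin> I \<longrightarrow> Z \<notin> I \<longrightarrow> {x\<in>X. up_nbhd c m x Z \<in> I} \<in> I)"

definition omits_colour :: "('k::ord set \<Rightarrow> nat) \<Rightarrow> nat \<Rightarrow> 'k set \<Rightarrow> 'k set \<Rightarrow> bool" where
  "omits_colour c k A B \<longleftrightarrow> (\<forall>x\<in>A. \<forall>y\<in>B. x < y \<longrightarrow> c {x, y} \<noteq> k)"

lemma dense_colour_mono:
  "dense_colour I c A B m \<Longrightarrow> A' \<subseteq> A \<Longrightarrow> B' \<subseteq> B \<Longrightarrow> dense_colour I c A' B' m"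
  unfolding dense_colour_def by (meson order_trans)

lemma up_nbhd_adjacency:
  fixes c :: "'k::order set \<Rightarrow> nat"
  assumes "y \<in> up_nbhd c k x Z" and "k \<in> K" and "x \<in> V" and "y \<in> V" and "V \<subseteq> H"
  shows "(x, y) \<in> adjacency V {e. e \<subseteq> H \<and> card e = 2 \<and> c e \<in> K}"
proof -
  have "x < y" "c {x, y} = k" using assms(1) unfolding up_nbhd_def by auto
  then have "card {x, y} = 2" by simp
  with assms \<open>c {x, y} = k\<close> show ?thesis unfolding adjacency_def by auto
qed

text \<open>Any two vertices of \<open>A - Y\<close> are joined by a path of colours \<open>m, n, m, m\<close>
  through \<open>B, A, B\<close>; the middle vertex exists by density of \<open>m\<close>, and every vertex
  of \<open>B\<close> has an \<open>n\<close>-neighbour in \<open>A - Y\<close>.\<close>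

lemma graph_connected_Diff_null:
  fixes c :: "'k::order set \<Rightarrow> nat"
  assumes ideal: "ideal_on I" and dense: "dense_colour I c A B m"
    and A_nbhd: "\<forall>x\<in>A. up_nbhd c m x B \<notin> I" and B_nbhd: "\<forall>y\<in>B. up_nbhd c n y A \<notin> I"
    and K: "m \<in> K" "n \<in> K" and Y: "Y \<in> I"
  shows "graph_connected (A \<union> B - Y) {e. e \<subseteq> A \<union> B \<and> card e = 2 \<and> c e \<in> K}"
proof -
  define V where "V = A \<union> B - Y"
  define R where "R = adjacency V {e. e \<subseteq> A \<union> B \<and> card e = 2 \<and> c e \<in> K}"
  have link: "(x, y) \<in> R\<^sup>* \<and> (y, x) \<in> R\<^sup>*"
    if "y \<in> up_nbhd c k x Z" "k \<in> K" "x \<in> V" "y \<in> V" for x y k Z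
  proof -
    have "(x, y) \<in> R"
      using up_nbhd_adjacency[OF that, of "A \<union> B"] unfolding R_def V_def by blast
    moreover from this have "(y, x) \<in> R"
      unfolding R_def by (rule symD[OF sym_adjacency])
    ultimately show ?thesis by blast
  qed
  have pick: "\<exists>x. x \<in> S - Y" if "S \<notin> I" for S
    using ideal_on_positive_ex[OF ideal ideal_on_Diff_positive[OF ideal that Y]] .
  have to_A: "\<exists>s\<in>A - Y. (u, s) \<in> R\<^sup>*" if "u \<in> V" for u
  proof (cases "u \<in> A")
    case False
    with that have "u \<in> B" unfolding V_def by blast
    then obtain s where "s \<in> up_nbhd c n u A - Y" using pick B_nbhd by blast
    with link[of s n u A] K that show ?thesis unfolding V_def up_nbhd_def by auto
  qed (use that V_def in auto)
  have within_A: "(x, y) \<in> R\<^sup>*" if x: "x \<in> A - Y" and y: "y \<in> A - Y" for x y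
  proof -
    obtain d where d: "d \<in> up_nbhd c m x B - Y" using pick A_nbhd x by blast
    define X where "X = up_nbhd c n d A - Y"
    define Z where "Z = up_nbhd c m y B - Y"
    have "X \<notin> I" "Z \<notin> I"
      using ideal_on_Diff_positive[OF ideal _ Y] A_nbhd B_nbhd d y
      unfolding X_def Z_def up_nbhd_def by auto
    moreover have "X \<subseteq> A" "Z \<subseteq> B" unfolding X_def Z_def up_nbhd_def by auto
    ultimately have null: "{g\<in>X. up_nbhd c m g Z \<in> I} \<in> I"
      using dense unfolding dense_colour_def by blast
    obtain g where g: "g \<in> X" "up_nbhd c m g Z \<notin> I"
      using ideal_on_subset[OF ideal null, of X] \<open>X \<notin> I\<close> by blast
    obtain e where e: "e \<in> up_nbhd c m g Z - Y" using pick g(2) by blast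
    have "(x, d) \<in> R\<^sup>*" using link[of d m x B] d x K unfolding V_def up_nbhd_def by auto
    also have "(d, g) \<in> R\<^sup>*" using link[of g n d A] g d K unfolding V_def X_def up_nbhd_def by auto
    also have "(g, e) \<in> R\<^sup>*" using link[of e m g Z] e g K unfolding V_def X_def Z_def up_nbhd_def by auto
    also have "(e, y) \<in> R\<^sup>*" using link[of e m y B] e y K unfolding V_def Z_def up_nbhd_def by auto
    finally show ?thesis .
  qed
  show ?thesis
    using graph_connected_if_hub[of V "A - Y"] to_A within_A unfolding R_def V_def by blast
qed

text \<open>Normality removes from \<open>Z\<close> the diagonal union of the null upper
  \<open>k\<close>-neighbourhoods of the points of \<open>X\<close>.\<close>

lemma not_dense_colour_omits_colour:
  fixes I :: "'k::wellorder set set"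
  assumes ideal: "ideal_on I" and normal: "normal_ideal I" and "\<not> dense_colour I c A B k"
  obtains A' B' where "A' \<subseteq> A" "B' \<subseteq> B" "A' \<notin> I" "B' \<notin> I" "omits_colour c k A' B'"
proof -
  obtain X Z where "X \<subseteq> A" "Z \<subseteq> B" "Z \<notin> I" and X': "{x\<in>X. up_nbhd c k x Z \<in> I} \<notin> I"
    using assms(3) unfolding dense_colour_def by blast
  define X' where "X' = {x\<in>X. up_nbhd c k x Z \<in> I}"
  define N where "N x = (if x \<in> X' then up_nbhd c k x Z else {})" for x
  have "N x \<in> I" for x using ideal unfolding N_def X'_def ideal_on_def by auto
  then have diagonal: "{y. \<exists>x<y. y \<in> N x} \<in> I" using normal unfolding normal_ideal_def by blast
  define Z' where "Z' = Z - {y. \<exists>x<y. y \<in> N x}"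
  have "Z' \<notin> I" unfolding Z'_def using ideal_on_Diff_positive[OF ideal \<open>Z \<notin> I\<close> diagonal] .
  moreover have "omits_colour c k X' Z'"
    unfolding omits_colour_def N_def up_nbhd_def Z'_def by auto
  moreover have "X' \<subseteq> A" "Z' \<subseteq> B" using \<open>X \<subseteq> A\<close> \<open>Z \<subseteq> B\<close> unfolding X'_def Z'_def by auto
  ultimately show ?thesis using that X' unfolding X'_def by blast
qed

section \<open>A winning strategy for Empty\<close>

definition omitting_move :: "'k set set \<Rightarrow> ('k::ord set \<Rightarrow> nat) \<Rightarrow> nat
    \<Rightarrow> 'k set \<times> 'k set \<Rightarrow> 'k set \<times> 'k set \<Rightarrow> bool" where
  "omitting_move I c k AB AB' \<longleftrightarrow> legal_move I AB' \<and> fst AB' \<subseteq> fst AB \<and> snd AB' \<subseteq> snd AB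
     \<and> omits_colour c k (fst AB') (snd AB')"

definition colours_omittable :: "'k set set \<Rightarrow> ('k::ord set \<Rightarrow> nat) \<Rightarrow> bool" where
  "colours_omittable I c \<longleftrightarrow> (\<forall>k AB. legal_move I AB \<longrightarrow> (\<exists>AB'. omitting_move I c k AB AB'))"

definition omitting_refinement ::
    "'k set set \<Rightarrow> ('k::ord set \<Rightarrow> nat) \<Rightarrow> nat \<Rightarrow> 'k set \<times> 'k set \<Rightarrow> 'k set \<times> 'k set" where
  "omitting_refinement I c k AB = (SOME AB'. omitting_move I c k AB AB')"

text \<open>Empty's move with index \<open>2 k\<close> omits colour \<open>k\<close>, so every colour is eventually omitted.\<close>

definition omitting_strategy ::
    "'k set set \<Rightarrow> ('k::ord set \<Rightarrow> nat) \<Rightarrow> ('k set \<times> 'k set) list \<Rightarrow> 'k set \<times> 'k set" where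
  "omitting_strategy I c h =
     omitting_refinement I c (length h div 2) (if h = [] then (UNIV, UNIV) else last h)"

lemma omitting_move_omitting_refinement:
  assumes "colours_omittable I c" and "legal_move I AB"
  shows "omitting_move I c k AB (omitting_refinement I c k AB)"
  using assms unfolding colours_omittable_def omitting_refinement_def by (blast intro: someI)

lemma legal_hist_snoc:
  assumes "legal_hist I h" and "legal_move I m"
    and "h \<noteq> [] \<Longrightarrow> fst m \<subseteq> fst (last h) \<and> snd m \<subseteq> snd (last h)"
  shows "legal_hist I (h @ [m])"
  unfolding legal_hist_def
proof (rule conjI; intro allI impI)
  fix i assume "i < length (h @ [m])"
  then show "legal_move I ((h @ [m]) ! i)"
    using assms(1,2) unfolding legal_hist_def by (cases "i < length h") (auto simp: nth_append)
next
  fix i assume i: "Suc i < length (h @ [m])"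
  show "fst ((h @ [m]) ! Suc i) \<subseteq> fst ((h @ [m]) ! i) \<and> snd ((h @ [m]) ! Suc i) \<subseteq> snd ((h @ [m]) ! i)"
  proof (cases "Suc i < length h")
    case True
    then show ?thesis using assms(1) unfolding legal_hist_def by (auto simp: nth_append)
  next
    case False
    with i have "Suc i = length h" by simp
    moreover from this have "h \<noteq> []" by auto
    moreover from calculation have "last h = h ! i" by (metis diff_Suc_1 last_conv_nth)
    ultimately show ?thesis using assms(3) by (auto simp: nth_append)
  qed
qed

lemma empty_strategy_omitting_strategy:
  assumes "ideal_on I" and "colours_omittable I c"
  shows "empty_strategy I (omitting_strategy I c)"
  unfolding empty_strategy_def
proof (intro allI impI, elim conjE)
  fix h assume h: "legal_hist I h"
  define AB where "AB = (if h = [] then (UNIV, UNIV) else last h)"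
  have "legal_move I AB"
  proof (cases "h = []")
    case True
    then show ?thesis using assms(1) unfolding AB_def legal_move_def ideal_on_def by simp
  next
    case False
    then show ?thesis using h unfolding AB_def legal_hist_def by (simp add: last_conv_nth)
  qed
  then have "omitting_move I c (length h div 2) AB (omitting_strategy I c h)"
    unfolding omitting_strategy_def AB_def by (rule omitting_move_omitting_refinement[OF assms(2)])
  then show "legal_hist I (h @ [omitting_strategy I c h])"
    unfolding omitting_move_def AB_def by (intro legal_hist_snoc[OF h]) auto
qed

lemma omitting_strategy_wins:
  assumes "ideal_on I" and "colours_omittable I c"
    and "legal_play I p" and "consistent_with (omitting_strategy I c) p"
  shows "\<not> nonempty_wins p"
proof
  assume "nonempty_wins p"
  then obtain \<alpha> \<beta> where "\<alpha> < \<beta>" "\<forall>n. \<alpha> \<in> fst (p n)" "\<forall>n. \<beta> \<in> snd (p n)"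
    unfolding nonempty_wins_def by blast
  define k where "k = c {\<alpha>, \<beta>}"
  define AB where "AB = (if k = 0 then (UNIV, UNIV) else p (2 * k - 1))"
  have "p (2 * k) = omitting_refinement I c k AB"
    using assms(4) unfolding consistent_with_def omitting_strategy_def AB_def
    by (simp add: last_map)
  moreover have "legal_move I AB"
    using assms(1,3) unfolding AB_def legal_play_def legal_move_def ideal_on_def by simp
  ultimately have "omits_colour c k (fst (p (2 * k))) (snd (p (2 * k)))"
    using omitting_move_omitting_refinement[OF assms(2)] unfolding omitting_move_def by simp
  then show False
    using \<open>\<alpha> < \<beta>\<close> \<open>\<forall>n. \<alpha> \<in> fst (p n)\<close> \<open>\<forall>n. \<beta> \<in> snd (p n)\<close>
    unfolding omits_colour_def k_def by blast
qed

lemma empty_winning_strategy_omitting_strategy: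
  assumes "ideal_on I" and "colours_omittable I c"
  shows "empty_winning_strategy I (omitting_strategy I c)"
  unfolding empty_winning_strategy_def
  using empty_strategy_omitting_strategy[OF assms] omitting_strategy_wins[OF assms] by blast

section \<open>Uniform normal ideals on a regular uncountable cardinal\<close>

locale uniform_normal_ideal =
  fixes I :: "'k::wellorder set set"
  assumes card_order_wo_rel_of: "card_order (wo_rel_of :: 'k rel)"
    and regularCard_wo_rel_of: "regularCard (wo_rel_of :: 'k rel)"
    and uncountable_UNIV: "uncountable (UNIV :: 'k set)"
    and ideal: "ideal_on I" and uniform: "uniform_ideal I" and normal: "normal_ideal I"
begin

lemma small_in_ideal: "|X| <o |UNIV :: 'k set| \<Longrightarrow> X \<in> I"
  using uniform unfolding uniform_ideal_def by blast

lemma infinite_UNIV: "infinite (UNIV :: 'k set)"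
  using uncountable_UNIV by (rule uncountable_infinite)

lemma card_of_atMost_ordLess_UNIV: "|{..a :: 'k}| <o |UNIV :: 'k set|"
  using card_of_atMost_ordLess[OF card_order_wo_rel_of infinite_UNIV] .

lemma atMost_in_ideal: "{..a} \<in> I"
  by (rule small_in_ideal[OF card_of_atMost_ordLess_UNIV])

lemma countable_UN_in_ideal:
  assumes "\<And>i :: nat. |S i| <o |UNIV :: 'k set|"
  shows "(\<Union>i. S i) \<in> I"
  using regularCard_card_of_UNIV[OF card_order_wo_rel_of regularCard_wo_rel_of infinite_UNIV]
  by (rule small_in_ideal[OF card_of_UN_nat_ordLess[OF _ uncountable_UNIV assms]])

text \<open>Countable completeness from normality: enumerate the pieces along an
  \<open>\<omega>\<close>-sequence \<open>e\<close>; a point above every \<open>e n\<close> lies in the diagonal union of the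
  pieces, and the points below some \<open>e n\<close> form a countable union of small sets.\<close>

lemma ex_positive_fibre:
  fixes f :: "'k \<Rightarrow> nat"
  assumes "B \<notin> I"
  shows "\<exists>n. {\<beta>\<in>B. f \<beta> = n} \<notin> I"
proof (rule ccontr)
  assume "\<nexists>n. {\<beta>\<in>B. f \<beta> = n} \<notin> I"
  then have fibres: "{\<beta>\<in>B. f \<beta> = n} \<in> I" for n by blast
  obtain e :: "nat \<Rightarrow> 'k" where "inj e"
    using infinite_countable_subset[OF infinite_UNIV] by blast
  define X where "X \<alpha> = (if \<alpha> \<in> range e then {\<beta>\<in>B. f \<beta> = inv e \<alpha>} else {})" for \<alpha>
  have "X \<alpha> \<in> I" for \<alpha>
    using fibres ideal unfolding X_def ideal_on_def by auto
  then have diagonal: "{\<beta>. \<exists>\<alpha><\<beta>. \<beta> \<in> X \<alpha>} \<in> I"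
    using normal unfolding normal_ideal_def by blast
  have low: "(\<Union>n. {..e n}) \<in> I"
    by (rule countable_UN_in_ideal[OF card_of_atMost_ordLess_UNIV])
  have "B \<subseteq> {\<beta>. \<exists>\<alpha><\<beta>. \<beta> \<in> X \<alpha>} \<union> (\<Union>n. {..e n})"
  proof
    fix \<beta> assume "\<beta> \<in> B"
    then have "\<beta> \<in> X (e (f \<beta>))" using \<open>inj e\<close> unfolding X_def by auto
    then show "\<beta> \<in> {\<beta>. \<exists>\<alpha><\<beta>. \<beta> \<in> X \<alpha>} \<union> (\<Union>n. {..e n})"
      by (cases "e (f \<beta>) < \<beta>") (auto simp: not_less)
  qed
  then have "B \<in> I" using ideal_on_subset[OF ideal ideal_on_Un[OF ideal diagonal low]] by blast
  with assms show False by blast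
qed

lemma ex_positive_up_nbhd:
  assumes "A \<notin> I"
  shows "\<exists>n. up_nbhd c n y A \<notin> I"
proof -
  have above: "A - {..y} \<notin> I" using ideal_on_Diff_positive[OF ideal assms atMost_in_ideal] .
  obtain n where "{z \<in> A - {..y}. c {y, z} = n} \<notin> I"
    using ex_positive_fibre[OF above, of "\<lambda>z. c {y, z}"] by blast
  moreover have "{z \<in> A - {..y}. c {y, z} = n} = up_nbhd c n y A"
    by (auto simp: up_nbhd_def not_le)
  ultimately show ?thesis by auto
qed

text \<open>Choose for each \<open>y\<close> a colour with positive upper neighbourhood in \<open>A\<close>, shrink \<open>B\<close> to a
  positive set on which this colour is a constant \<open>n\<close>, then remove from \<open>A\<close> the null set of
  points with null \<open>m\<close>-neighbourhood in the new \<open>B\<close>.\<close>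

lemma dense_colour_thinning:
  assumes A: "A \<notin> I" and B: "B \<notin> I" and dense: "dense_colour I c A B m"
  obtains A' B' n where "A' \<subseteq> A" "B' \<subseteq> B" "A' \<notin> I" "B' \<notin> I"
    "\<forall>x\<in>A'. up_nbhd c m x B' \<notin> I" "\<forall>y\<in>B'. up_nbhd c n y A' \<notin> I"
proof -
  define colour where "colour y = (SOME n. up_nbhd c n y A \<notin> I)" for y
  have colour: "up_nbhd c (colour y) y A \<notin> I" for y
    unfolding colour_def using ex_positive_up_nbhd[OF A] by (rule someI_ex)
  obtain n where "{y\<in>B. colour y = n} \<notin> I" using ex_positive_fibre[OF B, of colour] by blast
  define B' where "B' = {y\<in>B. colour y = n}"
  have B': "B' \<notin> I" "B' \<subseteq> B" unfolding B'_def using \<open>{y\<in>B. colour y = n} \<notin> I\<close> by auto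
  define N where "N = {x\<in>A. up_nbhd c m x B' \<in> I}"
  have "N \<in> I"
    unfolding N_def using dense[unfolded dense_colour_def, rule_format, OF order_refl B'(2) A B'(1)] .
  define A' where "A' = A - N"
  have "A' \<notin> I" unfolding A'_def using ideal_on_Diff_positive[OF ideal A \<open>N \<in> I\<close>] .
  moreover have "up_nbhd c n y A' \<notin> I" if "y \<in> B'" for y
  proof -
    have "up_nbhd c n y A - N \<notin> I"
      using ideal_on_Diff_positive[OF ideal colour \<open>N \<in> I\<close>] that unfolding B'_def by auto
    moreover have "up_nbhd c n y A - N \<subseteq> up_nbhd c n y A'" unfolding up_nbhd_def A'_def by auto
    ultimately show ?thesis using ideal_on_subset[OF ideal] by blast
  qed
  moreover have "up_nbhd c m x B' \<notin> I" if "x \<in> A'" for x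
    using that unfolding A'_def N_def by auto
  moreover have "A' \<subseteq> A" unfolding A'_def by auto
  ultimately show ?thesis using that B' by blast
qed

lemma hc_partition_if_dense_colour:
  assumes "A \<notin> I" and "B \<notin> I" and "dense_colour I c A B m"
  shows "hc_partition 2 c"
proof -
  obtain A' B' n where sub: "A' \<subseteq> A" "B' \<subseteq> B" and pos: "A' \<notin> I" "B' \<notin> I"
    and A'_nbhd: "\<forall>x\<in>A'. up_nbhd c m x B' \<notin> I" and B'_nbhd: "\<forall>y\<in>B'. up_nbhd c n y A' \<notin> I"
    using dense_colour_thinning[OF assms] by blast
  have dense': "dense_colour I c A' B' m" using dense_colour_mono[OF assms(3) sub] .
  define K where "K = (if m = n then {m, Suc m} else {m, n})"
  have K: "finite K" "card K = 2" "m \<in> K" "n \<in> K" unfolding K_def by auto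
  have "A' \<union> B' \<notin> I" using ideal_on_subset[OF ideal _ Un_upper1] pos(1) by blast
  then have size: "|A' \<union> B'| =o |UNIV :: 'k set|" by (rule uniform_ideal_positive_card[OF uniform])
  have "highly_connected (A' \<union> B') {e. e \<subseteq> A' \<union> B' \<and> card e = 2 \<and> c e \<in> K}"
    unfolding highly_connected_def
  proof (intro allI impI)
    fix Y assume "Y \<subseteq> A' \<union> B'" and "|Y| <o |A' \<union> B'|"
    then have "Y \<in> I" using small_in_ideal ordLess_ordIso_trans[OF _ size] by blast
    then show "graph_connected (A' \<union> B' - Y) {e. e \<subseteq> A' \<union> B' \<and> card e = 2 \<and> c e \<in> K}"
      using graph_connected_Diff_null[OF ideal dense' A'_nbhd B'_nbhd K(3,4)] by blast
  qed
  then show ?thesis unfolding hc_partition_def using size K(1,2) by blast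
qed

lemma colours_omittable_if_not_hc_partition:
  assumes "\<not> hc_partition 2 c"
  shows "colours_omittable I c"
  unfolding colours_omittable_def omitting_move_def legal_move_def
proof (intro allI impI, elim conjE)
  fix k and AB :: "'k set \<times> 'k set"
  assume "fst AB \<notin> I" "snd AB \<notin> I"
  then have "\<not> dense_colour I c (fst AB) (snd AB) k"
    using hc_partition_if_dense_colour assms by blast
  then obtain A' B' where "A' \<subseteq> fst AB" "B' \<subseteq> snd AB" "A' \<notin> I" "B' \<notin> I" "omits_colour c k A' B'"
    by (rule not_dense_colour_omits_colour[OF ideal normal])
  then show "\<exists>AB'. (fst AB' \<notin> I \<and> snd AB' \<notin> I) \<and> fst AB' \<subseteq> fst AB \<and> snd AB' \<subseteq> snd AB
      \<and> omits_colour c k (fst AB') (snd AB')"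
    by (intro exI[of _ "(A', B')"]) simp
qed

end

theorem mainTheorem6:
  fixes I :: "('k::wellorder) set set"
  assumes "card_order (wo_rel_of :: 'k rel)"
    and "regularCard (wo_rel_of :: 'k rel)"
    and "\<not> countable (UNIV :: 'k set)"
    and "ideal_on I" and "uniform_ideal I" and "normal_ideal I" and "two_precipitous I"
  shows "hc_arrow TYPE('k) 2"
  unfolding hc_arrow_def
proof (rule allI, rule ccontr)
  fix c :: "'k set \<Rightarrow> nat"
  assume "\<not> hc_partition 2 c"
  interpret uniform_normal_ideal I using assms(1-6) by unfold_locales
  have "colours_omittable I c"
    using \<open>\<not> hc_partition 2 c\<close> by (rule colours_omittable_if_not_hc_partition)
  then have "empty_winning_strategy I (omitting_strategy I c)"
    by (rule empty_winning_strategy_omitting_strategy[OF ideal])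
  with assms(7) show False unfolding two_precipitous_def by blast
qed

end
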